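(* Let $\langle S,L,\tau,\ell\rangle$ be a labelled Markov chain, $R$ a bisimulation with $S^2_\Delta\subseteq R\subseteq\,\sim$, and $P\in\mathcal{P}$ a maximal $R$-support policy. Then $\mathrm{Filter}(R)=\{(s,t)\in R\mid$ there is a path from $(s,t)$ to $S^2_\Delta$ in $\langle S\times S,P\rangle\}$.
   Context: Labelled Markov chain: finite $S$, finite $L$, $\tau:S\to\mathcal{D}(S)$, $\ell:S\to L$. $\Omega(\mu,\nu)$ = couplings. A bisimulation is an equivalence relation $R$ such that for $(s,t)\in R$, $\ell(s)=\ell(t)$ and some $\omega\in\Omega(\tau(s),\tau(t))$ has support in $R$; $\sim$ is bisimilarity. $S^2_\Delta=\{(s,s)\}$, $S^2_1=\{(s,t)\mid\ell(s)\ne\ell(t)\}$, $S^2_{0?}=(S\times S)\setminus(S^2_\Delta\cup S^2_1)$. $\mathcal{P}$ = policies $P:S\times S\to\mathcal{D}(S\times S)$ with $P(s,t)\in\Omega(\tau(s),\tau(t))$ for $(s,t)\notin S^2_1$ and $P(s,t)$ the point mass at $(s,t)$ for $(s,t)\in S^2_1$; a path in $\langle S\times S,P\rangle$ is a sequence of pairs with positive transition probabilities between consecutive ones. $P$ is a maximal $R$-support policy if $\mathrm{support}(P(s,t))=(\mathrm{support}(\tau(s))\times\mathrm{support}(\tau(t)))\cap R$ for all $(s,t)\in R\cap S^2_{0?}$. $R$ supports a path $(u_1,v_1)\dots(u_n,v_n)$ if $(u_i,v_i)\in R$ and $\mathrm{support}(P(u_i,v_i))\subseteq R$ for all $i$.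 $\mathrm{Filter}(R)=\{(s,t)\in R\mid\exists P'\in\mathcal{P}$ such that $R$ supports a path from $(s,t)$ to $S^2_\Delta$ in $\langle S\times S,P'\rangle\}$. *)

theory Defs
  imports "HOL-Probability.Probability"
begin

definition couplings :: "'s pmf \<Rightarrow> 's pmf \<Rightarrow> ('s \<times> 's) pmf set" where
  "couplings \<mu> \<nu> = {\<omega>. map_pmf fst \<omega> = \<mu> \<and> map_pmf snd \<omega> = \<nu>}"

definition is_bisimulation ::
  "('s \<Rightarrow> 's pmf) \<Rightarrow> ('s \<Rightarrow> 'l) \<Rightarrow> ('s \<times> 's) set \<Rightarrow> bool" where
  "is_bisimulation \<tau> lab R \<longleftrightarrow> equiv UNIV R \<and>
     (\<forall>(s,t)\<in>R. lab s = lab t \<and>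
        (\<exists>\<omega>\<in>couplings (\<tau> s) (\<tau> t). set_pmf \<omega> \<subseteq> R))"

definition bisimilarity :: "('s \<Rightarrow> 's pmf) \<Rightarrow> ('s \<Rightarrow> 'l) \<Rightarrow> ('s \<times> 's) set" where
  "bisimilarity \<tau> lab = \<Union>{R. is_bisimulation \<tau> lab R}"

definition diag :: "('s \<times> 's) set" where
  "diag = {(s, s) | s. True}"

definition S2_one :: "('s \<Rightarrow> 'l) \<Rightarrow> ('s \<times> 's) set" where
  "S2_one lab = {(s, t). lab s \<noteq> lab t}"

definition S2_zq :: "('s \<Rightarrow> 'l) \<Rightarrow> ('s \<times> 's) set" where
  "S2_zq lab = UNIV - (diag \<union> S2_one lab)"

definition policies ::
  "('s \<Rightarrow> 's pmf) \<Rightarrow> ('s \<Rightarrow> 'l) \<Rightarrow> ('s \<times> 's \<Rightarrow> ('s \<times> 's) pmf) set" where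
  "policies \<tau> lab = {P. (\<forall>s t. (s, t) \<notin> S2_one lab \<longrightarrow> P (s, t) \<in> couplings (\<tau> s) (\<tau> t)) \<and>
                          (\<forall>s t. (s, t) \<in> S2_one lab \<longrightarrow> P (s, t) = return_pmf (s, t))}"

definition is_path :: "('s \<times> 's \<Rightarrow> ('s \<times> 's) pmf) \<Rightarrow> ('s \<times> 's) list \<Rightarrow> bool" where
  "is_path P xs \<longleftrightarrow> xs \<noteq> [] \<and>
     (\<forall>i. Suc i < length xs \<longrightarrow> pmf (P (xs ! i)) (xs ! Suc i) > 0)"

definition path_from_to ::
  "('s \<times> 's \<Rightarrow> ('s \<times> 's) pmf) \<Rightarrow> ('s \<times> 's) list \<Rightarrow> 's \<times> 's \<Rightarrow> ('s \<times> 's) set \<Rightarrow> bool" where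
  "path_from_to P xs x T \<longleftrightarrow> is_path P xs \<and> hd xs = x \<and> last xs \<in> T"

definition max_support_policy ::
  "('s \<Rightarrow> 's pmf) \<Rightarrow> ('s \<Rightarrow> 'l) \<Rightarrow> ('s \<times> 's) set \<Rightarrow> ('s \<times> 's \<Rightarrow> ('s \<times> 's) pmf) \<Rightarrow> bool" where
  "max_support_policy \<tau> lab R P \<longleftrightarrow>
     (\<forall>s t. (s, t) \<in> R \<inter> S2_zq lab \<longrightarrow>
        set_pmf (P (s, t)) = (set_pmf (\<tau> s) \<times> set_pmf (\<tau> t)) \<inter> R)"

definition supports_path ::
  "('s \<times> 's) set \<Rightarrow> ('s \<times> 's \<Rightarrow> ('s \<times> 's) pmf) \<Rightarrow> ('s \<times> 's) list \<Rightarrow> bool" where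
  "supports_path R P xs \<longleftrightarrow> (\<forall>x\<in>set xs. x \<in> R \<and> set_pmf (P x) \<subseteq> R)"

definition Filter ::
  "('s \<Rightarrow> 's pmf) \<Rightarrow> ('s \<Rightarrow> 'l) \<Rightarrow> ('s \<times> 's) set \<Rightarrow> ('s \<times> 's) set" where
  "Filter \<tau> lab R = {(s, t) \<in> R. \<exists>P'\<in>policies \<tau> lab. \<exists>xs.
       path_from_to P' xs (s, t) diag \<and> supports_path R P' xs}"

end

theory Submission
  imports Defs
begin

text \<open>A path of some policy P' that stays in R and meets the diagonal only at its end can be
  replayed in P: at every non-diagonal pair of R the successor lies in the product of the
  supports and in R, which is exactly the support of the maximal R-support policy P.
  Conversely, a path of P from a pair of R stays in R, since P maps non-diagonal pairs of R
  into R; overriding P on the diagonal by the identity coupling yields a policy under which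
  R is closed, so R supports the path.\<close>

lemma is_path_Cons:
  "is_path Q (x # xs) \<longleftrightarrow> xs = [] \<or> (pmf (Q x) (hd xs) > 0 \<and> is_path Q xs)"
proof (cases xs)
  case (Cons y ys)
  have "(\<forall>i. Suc i < length (x # xs) \<longrightarrow> pmf (Q ((x # xs) ! i)) ((x # xs) ! Suc i) > 0)
    \<longleftrightarrow> pmf (Q x) y > 0 \<and> (\<forall>i. Suc i < length xs \<longrightarrow> pmf (Q (xs ! i)) (xs ! Suc i) > 0)"
    using Cons by (auto simp: nth_Cons split: nat.split)
  then show ?thesis using Cons by (simp add: is_path_def)
qed (simp add: is_path_def)

lemma is_path_first_hit:
  assumes "is_path Q xs" "last xs \<in> T"
  obtains ys where "is_path Q ys" "hd ys = hd xs" "last ys \<in> T" "set ys \<subseteq> set xs"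
    "set (butlast ys) \<inter> T = {}"
  using assms
proof (induction xs arbitrary: thesis)
  case Nil
  then show ?case by (simp add: is_path_def)
next
  case (Cons x xs)
  show ?case
  proof (cases "x \<in> T")
    case True
    then show ?thesis by (intro Cons.prems(1)[of "[x]"]) (auto simp: is_path_def)
  next
    case False
    with Cons.prems have "xs \<noteq> []" by auto
    with Cons.prems have step: "pmf (Q x) (hd xs) > 0" and "is_path Q xs" "last xs \<in> T"
      by (auto simp: is_path_Cons)
    then obtain ys where ys: "is_path Q ys" "hd ys = hd xs" "last ys \<in> T" "set ys \<subseteq> set xs"
      "set (butlast ys) \<inter> T = {}"
      using Cons.IH by blast
    then have "ys \<noteq> []" by (auto simp: is_path_def)
    with ys step False show ?thesis
      by (intro Cons.prems(1)[of "x # ys"]) (auto simp: is_path_Cons)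
  qed
qed

lemma is_path_step:
  assumes "is_path Q xs" "Suc i < length xs"
  shows "xs ! Suc i \<in> set_pmf (Q (xs ! i))"
proof -
  have "pmf (Q (xs ! i)) (xs ! Suc i) > 0"
    using assms by (simp add: is_path_def)
  then show ?thesis by (simp add: set_pmf_iff)
qed

lemma is_path_mono:
  assumes "is_path Q xs" "\<And>y. y \<in> set (butlast xs) \<Longrightarrow> set_pmf (Q y) \<subseteq> set_pmf (P y)"
  shows "is_path P xs"
  unfolding is_path_def
proof (intro conjI allI impI)
  show "xs \<noteq> []" using assms(1) by (simp add: is_path_def)
next
  fix i assume i: "Suc i < length xs"
  then have "i < length (butlast xs)" by simp
  then have "xs ! i \<in> set (butlast xs)"
    by (metis nth_butlast nth_mem)
  moreover have "xs ! Suc i \<in> set_pmf (Q (xs ! i))"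
    using assms(1) i by (rule is_path_step)
  ultimately have "xs ! Suc i \<in> set_pmf (P (xs ! i))"
    using assms(2) by blast
  then show "pmf (P (xs ! i)) (xs ! Suc i) > 0" by (rule pmf_positive)
qed

lemma is_path_closed:
  assumes "is_path Q xs" "hd xs \<in> A" "\<And>y. y \<in> A \<Longrightarrow> set_pmf (Q y) \<subseteq> A"
  shows "set xs \<subseteq> A"
proof -
  have "i < length xs \<Longrightarrow> xs ! i \<in> A" for i
  proof (induction i)
    case 0
    then show ?case using assms(2) by (simp add: hd_conv_nth)
  next
    case (Suc i)
    then have "xs ! Suc i \<in> set_pmf (Q (xs ! i))"
      using assms(1) is_path_step by blast
    moreover have "xs ! i \<in> A" using Suc by simp
    ultimately show ?case using assms(3) by blast
  qed
  then show ?thesis by (metis in_set_conv_nth subsetI)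
qed

lemma set_pmf_coupling:
  "\<omega> \<in> couplings \<mu> \<nu> \<Longrightarrow> set_pmf \<omega> \<subseteq> set_pmf \<mu> \<times> set_pmf \<nu>"
  unfolding couplings_def by force

lemma bisimulation_same_label:
  "is_bisimulation \<tau> lab R \<Longrightarrow> (s, t) \<in> R \<Longrightarrow> lab s = lab t"
  unfolding is_bisimulation_def by blast

lemma bisimulation_off_diag:
  "is_bisimulation \<tau> lab R \<Longrightarrow> x \<in> R \<Longrightarrow> x \<notin> diag \<Longrightarrow> x \<in> S2_zq lab"
  by (cases x) (auto simp: S2_zq_def S2_one_def dest: bisimulation_same_label)

lemma max_support_policy_maximal:
  assumes "max_support_policy \<tau> lab R P" "P' \<in> policies \<tau> lab"
    and "x \<in> R \<inter> S2_zq lab" "set_pmf (P' x) \<subseteq> R"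
  shows "set_pmf (P' x) \<subseteq> set_pmf (P x)"
proof (cases x)
  case (Pair s t)
  with assms(2,3) have "P' x \<in> couplings (\<tau> s) (\<tau> t)"
    by (auto simp: policies_def S2_zq_def)
  with assms Pair show ?thesis
    by (auto simp: max_support_policy_def dest!: set_pmf_coupling)
qed

lemma max_support_policy_closed:
  "max_support_policy \<tau> lab R P \<Longrightarrow> x \<in> R \<inter> S2_zq lab \<Longrightarrow> set_pmf (P x) \<subseteq> R"
  by (cases x) (auto simp: max_support_policy_def)

definition diag_override ::
  "('s \<Rightarrow> 's pmf) \<Rightarrow> ('s \<times> 's \<Rightarrow> ('s \<times> 's) pmf) \<Rightarrow> 's \<times> 's \<Rightarrow> ('s \<times> 's) pmf" where
  "diag_override \<tau> P x = (if x \<in> diag then map_pmf (\<lambda>u. (u, u)) (\<tau> (fst x)) else P x)"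

lemma diag_override_policy:
  "P \<in> policies \<tau> lab \<Longrightarrow> diag_override \<tau> P \<in> policies \<tau> lab"
  by (auto simp: policies_def diag_override_def couplings_def pmf.map_comp o_def S2_one_def diag_def)

lemma set_pmf_diag_override_diag:
  "x \<in> diag \<Longrightarrow> set_pmf (diag_override \<tau> P x) \<subseteq> diag"
  by (auto simp: diag_override_def diag_def)

lemma diag_override_closed:
  assumes "is_bisimulation \<tau> lab R" "diag \<subseteq> R" "max_support_policy \<tau> lab R P" "x \<in> R"
  shows "set_pmf (diag_override \<tau> P x) \<subseteq> R"
proof (cases "x \<in> diag")
  case True
  then show ?thesis using assms(2) set_pmf_diag_override_diag[of x \<tau> P] by blast
next
  case False
  then show ?thesis
    using max_support_policy_closed[OF assms(3)] bisimulation_off_diag[OF assms(1,4)] assms(4)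
    by (simp add: diag_override_def)
qed

lemma Filter_path_to_diag:
  assumes "is_bisimulation \<tau> lab R" "max_support_policy \<tau> lab R P" "x \<in> Filter \<tau> lab R"
  shows "\<exists>xs. path_from_to P xs x diag"
proof -
  obtain P' xs where P': "P' \<in> policies \<tau> lab" "path_from_to P' xs x diag" "supports_path R P' xs"
    using assms(3) by (auto simp: Filter_def)
  then obtain ys where ys: "is_path P' ys" "hd ys = x" "last ys \<in> diag" "set ys \<subseteq> set xs"
    "set (butlast ys) \<inter> diag = {}"
    by (auto simp: path_from_to_def elim: is_path_first_hit)
  have "set_pmf (P' y) \<subseteq> set_pmf (P y)" if "y \<in> set (butlast ys)" for y
  proof -
    have "y \<in> R" "set_pmf (P' y) \<subseteq> R" "y \<notin> diag"
      using that ys(4,5) P'(3) in_set_butlastD by (fastforce simp: supports_path_def)+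
    then show ?thesis
      by (intro max_support_policy_maximal[OF assms(2) P'(1)] IntI bisimulation_off_diag[OF assms(1)])
  qed
  with ys(1) have "is_path P ys" by (rule is_path_mono)
  with ys(2,3) show ?thesis by (auto simp: path_from_to_def)
qed

lemma path_to_diag_in_Filter:
  assumes "is_bisimulation \<tau> lab R" "diag \<subseteq> R" "P \<in> policies \<tau> lab"
    and "max_support_policy \<tau> lab R P" "x \<in> R" "path_from_to P xs x diag"
  shows "x \<in> Filter \<tau> lab R"
proof -
  obtain ys where ys: "is_path P ys" "hd ys = x" "last ys \<in> diag" "set (butlast ys) \<inter> diag = {}"
    using assms(6) by (auto simp: path_from_to_def elim: is_path_first_hit)
  define P' where "P' = diag_override \<tau> P"
  have closed: "set_pmf (P' y) \<subseteq> R" if "y \<in> R" for y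
    unfolding P'_def using assms(1,2,4) that by (rule diag_override_closed)
  have "is_path P' ys"
    using ys(1) by (rule is_path_mono) (use ys(4) in \<open>auto simp: P'_def diag_override_def\<close>)
  moreover have "set ys \<subseteq> R"
    using \<open>is_path P' ys\<close> _ closed by (rule is_path_closed) (simp add: ys(2) assms(5))
  ultimately have "path_from_to P' ys x diag" "supports_path R P' ys"
    using ys(2,3) closed by (auto simp: path_from_to_def supports_path_def)
  then show ?thesis
    using assms(5) diag_override_policy[OF assms(3)] by (auto simp: Filter_def P'_def)
qed

theorem mainTheorem18:
  fixes \<tau> :: "'s::finite \<Rightarrow> 's pmf" and lab :: "'s \<Rightarrow> 'l::finite"
    and R :: "('s \<times> 's) set" and P :: "'s \<times> 's \<Rightarrow> ('s \<times> 's) pmf"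
  assumes "is_bisimulation \<tau> lab R"
    and "diag \<subseteq> R" and "R \<subseteq> bisimilarity \<tau> lab"
    and "P \<in> policies \<tau> lab"
    and "max_support_policy \<tau> lab R P"
  shows "Filter \<tau> lab R = {(s, t) \<in> R. \<exists>xs. path_from_to P xs (s, t) diag}"
proof (intro set_eqI iffI)
  fix x assume x: "x \<in> Filter \<tau> lab R"
  then have "x \<in> R" by (auto simp: Filter_def)
  with Filter_path_to_diag[OF assms(1,5) x]
  show "x \<in> {(s, t) \<in> R. \<exists>xs. path_from_to P xs (s, t) diag}" by auto
next
  fix x assume "x \<in> {(s, t) \<in> R. \<exists>xs. path_from_to P xs (s, t) diag}"
  then obtain xs where "x \<in> R" "path_from_to P xs x diag" by auto
  then show "x \<in> Filter \<tau> lab R" by (rule path_to_diag_in_Filter[OF assms(1,2,4,5)])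
qed

end
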